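(* Let $K$ be any field, let $L\subset\mathbb{Z}^m$ be a non-zero lattice with $L\cap\mathbb{N}^m=\{\mathbf 0\}$, and let $I_L\subset K[x_1,\ldots,x_m]$ be its lattice ideal. Then $\mathrm{bar}(I_L)\ge\delta(\Gamma_L)_{\{0,1\}}$ and $\mathrm{ara}_{\mathcal{A}}(I_L)\ge\delta(\Gamma_L)_{\Omega}$, where $\Omega=\{0,1,\ldots,\dim\Gamma_L\}$.
   Context: For $\mathbf u\in\mathbb{N}^m$ write $\mathbf x^{\mathbf u}=x_1^{u_1}\cdots x_m^{u_m}$; for $\mathbf u\in\mathbb{Z}^m$, $\mathbf u_\pm\in\mathbb{N}^m$ are its positive and negative parts. $I_L=(\mathbf x^{\mathbf u_+}-\mathbf x^{\mathbf u_-}:\mathbf u\in L)$. $\mathrm{Sat}(L)=\{\mathbf u\in\mathbb{Z}^m:d\mathbf u\in L\text{ for some nonzero }d\in\mathbb{Z}\}$, and $\mathcal{A}=\{\mathbf a_1,\ldots,\mathbf a_m\}\subset\mathbb{Z}^n$ satisfies $\mathrm{Sat}(L)=\ker_{\mathbb{Z}}(\mathcal{A})$. Grade by $\deg_{\mathcal{A}}(x_i)=\mathbf a_i$; a polynomial is $\mathcal{A}$-homogeneous if all its monomials have the same $\mathcal{A}$-degree. $\mathrm{bar}(I_L)$ is the least $s$ such that there are binomials $B_1,\ldots,B_s\in I_L$ with $\mathrm{rad}(I_L)=\mathrm{rad}(B_1,\ldots,B_s)$; $\mathrm{ara}_{\mathcal{A}}(I_L)$ is the least $s$ such that there are $\mathcal{A}$-homogeneous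 $F_1,\ldots,F_s\in I_L$ with $\mathrm{rad}(I_L)=\mathrm{rad}(F_1,\ldots,F_s)$. A monomial $M$ is indispensable of $I_L$ if every system of binomial generators of $I_L$ contains a binomial having $M$ as a monomial. $\mathcal{T}_{\min}$ is the set of inclusion-minimal supports ($\mathrm{supp}(\mathbf x^{\mathbf w})=\{i:w_i\ne0\}$) of indispensable monomials of $I_L$. $\Gamma_L$ is the simplicial complex on vertex set $\mathcal{T}_{\min}$ in which $\{E_1,\ldots,E_k\}$ is a face iff there exist monomials $M_i$ with $\mathrm{supp}(M_i)=E_i$ all of the same $\mathcal{A}$-degree. For a simplicial complex $\mathcal{D}$ with vertex set $\mathcal{V}$ and $J\subseteq\{0,\ldots,\dim\mathcal{D}\}$, a $J$-matching is a set of pairwise disjoint faces of $\mathcal{D}$ each of dimension in $J$; its support is the union of these faces; it is a maximal $J$-matching if its support has the maximum possible cardinality among all $J$-matchings; $\delta(\mathcal{D})_J$ is the minimum number of faces in a maximal $J$-matching. *)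

theory Defs
  imports "HOL-Library.Poly_Mapping" "HOL-Library.Extended_Nat"
begin

(* Variables x_i are indexed by a finite type 'n (so m = CARD('n)). *)

type_synonym ('n, 'k) mpoly = "('n \<Rightarrow>\<^sub>0 nat) \<Rightarrow>\<^sub>0 'k"

definition is_ideal :: "'r::comm_ring_1 set \<Rightarrow> bool" where
  "is_ideal J \<longleftrightarrow> 0 \<in> J \<and> (\<forall>f\<in>J. \<forall>g\<in>J. f + g \<in> J) \<and> (\<forall>f\<in>J. \<forall>r. r * f \<in> J)"

definition ideal_gen :: "'r::comm_ring_1 set \<Rightarrow> 'r set" where
  "ideal_gen S = \<Inter>{J. S \<subseteq> J \<and> is_ideal J}"

definition rad :: "'r::comm_ring_1 set \<Rightarrow> 'r set" where
  "rad J = {f. \<exists>k::nat. f ^ k \<in> J}"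

definition mono :: "('n::finite \<Rightarrow> nat) \<Rightarrow> ('n, 'k::comm_ring_1) mpoly" where
  "mono u = Poly_Mapping.single (Abs_poly_mapping u) 1"

definition monos_of :: "('n::finite, 'k::comm_ring_1) mpoly \<Rightarrow> ('n \<Rightarrow> nat) set" where
  "monos_of F = {u. Abs_poly_mapping u \<in> Poly_Mapping.keys F}"

definition binomial :: "('n::finite, 'k::comm_ring_1) mpoly \<Rightarrow> bool" where
  "binomial B \<longleftrightarrow> (\<exists>u v. B = mono u - mono v)"

definition pos_part :: "('n \<Rightarrow> int) \<Rightarrow> ('n \<Rightarrow> nat)" where
  "pos_part u = (\<lambda>i. nat (u i))"

definition neg_part :: "('n \<Rightarrow> int) \<Rightarrow> ('n \<Rightarrow> nat)" where
  "neg_part u = (\<lambda>i. nat (- u i))"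

definition is_lattice :: "('n \<Rightarrow> int) set \<Rightarrow> bool" where
  "is_lattice L \<longleftrightarrow> (\<lambda>i. 0) \<in> L \<and> (\<forall>u\<in>L. \<forall>v\<in>L. (\<lambda>i. u i + v i) \<in> L) \<and> (\<forall>u\<in>L. (\<lambda>i. - u i) \<in> L)"

definition lattice_ideal :: "('n::finite \<Rightarrow> int) set \<Rightarrow> ('n, 'k::comm_ring_1) mpoly set" where
  "lattice_ideal L = ideal_gen {mono (pos_part u) - mono (neg_part u) | u. u \<in> L}"

definition Sat :: "('n \<Rightarrow> int) set \<Rightarrow> ('n \<Rightarrow> int) set" where
  "Sat L = {u. \<exists>d::int. d \<noteq> 0 \<and> (\<lambda>i. d * u i) \<in> L}"

(* \<A> = {a_1,...,a_m} \<subseteq> \<int>^n given as a map a : 'n \<Rightarrow> ('d \<Rightarrow> int). *)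
definition kerZ :: "('n::finite \<Rightarrow> 'd \<Rightarrow> int) \<Rightarrow> ('n \<Rightarrow> int) set" where
  "kerZ a = {u. \<forall>j. (\<Sum>i\<in>UNIV. u i * a i j) = 0}"

definition Adeg :: "('n::finite \<Rightarrow> 'd \<Rightarrow> int) \<Rightarrow> ('n \<Rightarrow> nat) \<Rightarrow> ('d \<Rightarrow> int)" where
  "Adeg a u = (\<lambda>j. \<Sum>i\<in>UNIV. int (u i) * a i j)"

definition A_homogeneous :: "('n::finite \<Rightarrow> 'd \<Rightarrow> int) \<Rightarrow> ('n, 'k::comm_ring_1) mpoly \<Rightarrow> bool" where
  "A_homogeneous a F \<longleftrightarrow> (\<forall>u\<in>monos_of F. \<forall>v\<in>monos_of F. Adeg a u = Adeg a v)"

section \<open>Arithmetical ranks (as extended naturals; infimum of the empty set is \<infinity>)\<close>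

definition bar :: "('n::finite, 'k::comm_ring_1) mpoly set \<Rightarrow> enat" where
  "bar I = (INF s \<in> {s. \<exists>B::nat \<Rightarrow> ('n, 'k) mpoly.
              (\<forall>i<s. binomial (B i) \<and> B i \<in> I) \<and> rad I = rad (ideal_gen (B ` {..<s}))}. enat s)"

definition araA :: "('n::finite \<Rightarrow> 'd \<Rightarrow> int) \<Rightarrow> ('n, 'k::comm_ring_1) mpoly set \<Rightarrow> enat" where
  "araA a I = (INF s \<in> {s. \<exists>F::nat \<Rightarrow> ('n, 'k) mpoly.
              (\<forall>i<s. A_homogeneous a (F i) \<and> F i \<in> I) \<and> rad I = rad (ideal_gen (F ` {..<s}))}. enat s)"

definition indispensable_monomial :: "('n::finite, 'k::comm_ring_1) mpoly set \<Rightarrow> ('n \<Rightarrow> nat) \<Rightarrow> bool" where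
  "indispensable_monomial I M \<longleftrightarrow>
     (\<forall>G. (\<forall>B\<in>G. binomial B) \<and> ideal_gen G = I \<longrightarrow> (\<exists>B\<in>G. M \<in> monos_of B))"

definition msupp :: "('n \<Rightarrow> nat) \<Rightarrow> 'n set" where
  "msupp u = {i. u i \<noteq> 0}"

definition T_min :: "('n::finite, 'k::comm_ring_1) mpoly set \<Rightarrow> 'n set set" where
  "T_min I = (let T = {msupp M | M. indispensable_monomial I M}
              in {E \<in> T. \<forall>E'\<in>T. E' \<subseteq> E \<longrightarrow> E' = E})"

definition Gamma :: "('n::finite \<Rightarrow> 'd \<Rightarrow> int) \<Rightarrow> ('n, 'k::comm_ring_1) mpoly set \<Rightarrow> 'n set set set" where
  "Gamma a I = {F. F \<noteq> {} \<and> F \<subseteq> T_min I \<and>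
      (\<exists>M::'n set \<Rightarrow> ('n \<Rightarrow> nat). \<exists>d. \<forall>E\<in>F. msupp (M E) = E \<and> Adeg a (M E) = d)}"

section \<open>Matchings in a simplicial complex (given by its set of nonempty faces)\<close>

definition cdim :: "'v set set \<Rightarrow> nat" where
  "cdim D = Max ((\<lambda>F. card F - 1) ` D)"

definition J_matching :: "'v set set \<Rightarrow> nat set \<Rightarrow> 'v set set \<Rightarrow> bool" where
  "J_matching D J Ms \<longleftrightarrow> finite Ms \<and> Ms \<subseteq> D \<and> (\<forall>F\<in>Ms. finite F \<and> F \<noteq> {} \<and> card F - 1 \<in> J)
      \<and> (\<forall>F\<in>Ms. \<forall>G\<in>Ms. F \<noteq> G \<longrightarrow> F \<inter> G = {})"

definition max_J_matching :: "'v set set \<Rightarrow> nat set \<Rightarrow> 'v set set \<Rightarrow> bool" where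
  "max_J_matching D J Ms \<longleftrightarrow> J_matching D J Ms \<and>
      (\<forall>Ms'. J_matching D J Ms' \<longrightarrow> card (\<Union>Ms') \<le> card (\<Union>Ms))"

definition delta :: "'v set set \<Rightarrow> nat set \<Rightarrow> nat" where
  "delta D J = (LEAST k. \<exists>Ms. max_J_matching D J Ms \<and> card Ms = k)"

end

theory Submission
  imports Defs "HOL-Library.Disjoint_Sets"
begin

text \<open>
  For a polynomial in \<open>I\<^sub>L\<close>, the coefficients of its monomials in any class \<open>z + L\<close> sum to zero,
  so each of its monomials has a different partner congruent to it modulo \<open>L\<close>; taking a divisor
  of minimal degree with this property, each such monomial is divisible by an indispensable one.
  Now let \<open>rad I\<^sub>L = rad (F\<^sub>1, \<dots>, F\<^sub>s)\<close>. For \<open>E \<in> T\<^sub>m\<^sub>i\<^sub>n\<close> there is a binomial \<open>x\<^sup>X - x\<^sup>Y \<in> I\<^sub>L\<close>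
  with \<open>supp X = E\<close> and \<open>supp Y \<notsubseteq> E\<close> (because \<open>L \<inter> \<nat>\<^sup>m = 0\<close>), and a power of it lies in
  \<open>(F\<^sub>1, \<dots>, F\<^sub>s)\<close> and contains the monomial \<open>x\<^bsup>kX\<^esup>\<close>. Some \<open>F\<^sub>i\<close> then has a monomial dividing
  \<open>x\<^bsup>kX\<^esup>\<close>, whose support is exactly \<open>E\<close> by minimality of \<open>E\<close>. So the supports of the monomials
  of the \<open>F\<^sub>i\<close> cover \<open>T\<^sub>m\<^sub>i\<^sub>n\<close>. Those of a single \<open>\<A>\<close>-homogeneous \<open>F\<^sub>i\<close> form a face of \<open>\<Gamma>\<^sub>L\<close>, of
  dimension at most one if \<open>F\<^sub>i\<close> is a binomial (binomials in \<open>I\<^sub>L\<close> are \<open>\<A>\<close>-homogeneous), and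
  making these faces disjoint yields a maximal matching with at most \<open>s\<close> faces.
\<close>

abbreviation lookup where "lookup \<equiv> Poly_Mapping.lookup"
abbreviation keys where "keys \<equiv> Poly_Mapping.keys"
abbreviation single where "single \<equiv> Poly_Mapping.single"

lemma lookup_Abs_poly_mapping_finite [simp]:
  "lookup (Abs_poly_mapping (u :: 'n::finite \<Rightarrow> 'b::zero)) = u"
  by (rule lookup_Abs_poly_mapping) simp

lemma msupp_lookup: "msupp (lookup w) = keys w"
  by (auto simp: msupp_def in_keys_iff)

lemma mono_eq_single: "(mono u :: ('n::finite, 'k::comm_ring_1) mpoly) = single (Abs_poly_mapping u) 1"
  by (simp add: mono_def)

lemma monos_of_eq_lookup_keys:
  "u \<in> monos_of F \<longleftrightarrow> (\<exists>w\<in>keys F. u = lookup w)"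
  by (auto simp: monos_of_def) (metis lookup_Abs_poly_mapping_finite)

lemma keys_single_diff_single:
  "keys (single p 1 - single q (1::'k::comm_ring_1)) \<subseteq> {p, q}"
  using keys_diff[of "single p (1::'k)" "single q 1"] by auto

lemma in_keys_single_diff_single:
  "p \<noteq> q \<Longrightarrow> p \<in> keys (single p 1 - single q (1::'k::comm_ring_1))"
  by (simp add: in_keys_iff lookup_minus lookup_single_not_eq)

lemma monos_of_mono_diff_mono:
  "monos_of (mono u - mono v :: ('n::finite, 'k::comm_ring_1) mpoly) \<subseteq> {u, v}"
proof
  fix w assume "w \<in> monos_of (mono u - mono v :: ('n, 'k) mpoly)"
  then have "Abs_poly_mapping w \<in> {Abs_poly_mapping u, Abs_poly_mapping v}"
    using keys_single_diff_single[of "Abs_poly_mapping u" "Abs_poly_mapping v", where 'k='k] by (auto simp: monos_of_def mono_eq_single)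
  then show "w \<in> {u, v}" by (metis insert_iff lookup_Abs_poly_mapping_finite singletonD)
qed

lemma poly_mapping_sum_single_lookup:
  "(f :: 'a \<Rightarrow>\<^sub>0 'b::comm_monoid_add) = (\<Sum>k\<in>keys f. single k (lookup f k))"
proof (rule poly_mapping_eqI)
  fix x
  have "lookup (\<Sum>k\<in>keys f. single k (lookup f k)) x = (\<Sum>k\<in>keys f. lookup f k when k = x)"
    by (simp add: lookup_sum lookup_single)
  also have "\<dots> = lookup f x"
    by (cases "x \<in> keys f") (auto simp: when_def in_keys_iff)
  finally show "lookup f x = lookup (\<Sum>k\<in>keys f. single k (lookup f k)) x" ..
qed

lemma lookup_times_single:
  fixes f :: "('a::cancel_comm_monoid_add) \<Rightarrow>\<^sub>0 ('b::comm_semiring_1)"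
  shows "lookup (f * single t c) s = (\<Sum>l. lookup f l * c when s = l + t)"
proof -
  have "(\<Sum>q. lookup (single t c) q when s = l + q) = (c when s = l + t)" for l
  proof -
    have "(\<lambda>q. lookup (single t c) q when s = l + q) = (\<lambda>q. (c when s = l + q) when t = q)"
      by (auto simp: lookup_single_not_eq when_def)
    then show ?thesis by (simp only: Sum_any_when_equal')
  qed
  then show ?thesis by (simp add: lookup_mult mult_when)
qed

lemma lookup_times_single_add:
  fixes f :: "('a::cancel_comm_monoid_add) \<Rightarrow>\<^sub>0 ('b::comm_semiring_1)"
  shows "lookup (f * single t c) (s + t) = lookup f s * c"
proof -
  have "(\<lambda>l. lookup f l * c when s + t = l + t) = (\<lambda>l. lookup f l * c when l = s)"
    by (auto simp: when_def)
  then show ?thesis by (simp add: lookup_times_single)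
qed

lemma lookup_times_single_not_add:
  fixes f :: "('a::cancel_comm_monoid_add) \<Rightarrow>\<^sub>0 ('b::comm_semiring_1)"
  assumes "\<And>l. s \<noteq> l + t"
  shows "lookup (f * single t c) s = 0"
  using assms by (simp add: lookup_times_single when_def)

lemma is_ideal_ideal_gen: "is_ideal (ideal_gen S)"
  unfolding is_ideal_def ideal_gen_def by blast

lemma ideal_gen_subset: "S \<subseteq> ideal_gen S"
  by (auto simp: ideal_gen_def)

lemma ideal_gen_minimal: "is_ideal J \<Longrightarrow> S \<subseteq> J \<Longrightarrow> ideal_gen S \<subseteq> J"
  by (auto simp: ideal_gen_def)

lemma ideal_gen_mult: "f \<in> ideal_gen S \<Longrightarrow> r * f \<in> ideal_gen S"
  using is_ideal_ideal_gen[of S] by (simp add: is_ideal_def)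

lemma subset_rad: "J \<subseteq> rad J"
  unfolding rad_def by (auto intro: exI[of _ 1])

lemma ideal_gen_keys_divisible:
  fixes S :: "('a::cancel_comm_monoid_add \<Rightarrow>\<^sub>0 'k::comm_ring_1) set"
  assumes Q: "\<And>a b. Q (a + b) \<Longrightarrow> Q b"
    and P: "P \<in> ideal_gen S" and w: "w \<in> keys P" "Q w"
  shows "\<exists>g\<in>S. \<exists>p\<in>keys g. \<exists>c. w = c + p"
proof -
  define J where "J = {P :: 'a \<Rightarrow>\<^sub>0 'k. \<forall>w\<in>keys P. Q w \<longrightarrow> (\<exists>g\<in>S. \<exists>p\<in>keys g. \<exists>c. w = c + p)}"
  have mult: "r * f \<in> J" if f: "f \<in> J" for r f
  proof -
    have "\<exists>g\<in>S. \<exists>p\<in>keys g. \<exists>c. w = c + p" if w: "w \<in> keys (r * f)" "Q w" for w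
    proof -
      from w(1) keys_mult[of r f] obtain a b where ab: "w = a + b" "b \<in> keys f" by blast
      from ab(1) w(2) Q have "Q b" by simp
      with ab(2) f obtain g p c where "g \<in> S" "p \<in> keys g" "b = c + p"
        unfolding J_def by blast
      with ab(1) show ?thesis by (metis add.assoc)
    qed
    then show ?thesis unfolding J_def by blast
  qed
  have add: "f + g \<in> J" if "f \<in> J" "g \<in> J" for f g
    using that keys_add[of f g] unfolding J_def by blast
  have "0 \<in> J" by (simp add: J_def)
  with mult add have "is_ideal J"
    unfolding is_ideal_def by blast
  moreover have "S \<subseteq> J"
  proof
    fix g assume "g \<in> S"
    have "\<And>w::'a. w = 0 + w" by simp
    with \<open>g \<in> S\<close> show "g \<in> J" unfolding J_def by blast
  qed
  ultimately have "P \<in> J"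
    using ideal_gen_minimal P by blast
  with w show ?thesis unfolding J_def by blast
qed

section \<open>Coefficient sums over classes modulo a lattice\<close>

lemma lattice_zero: "is_lattice L \<Longrightarrow> (\<lambda>i. 0) \<in> L"
  by (simp add: is_lattice_def)

lemma lattice_add: "is_lattice L \<Longrightarrow> u \<in> L \<Longrightarrow> v \<in> L \<Longrightarrow> (\<lambda>i. u i + v i) \<in> L"
  by (simp add: is_lattice_def)

lemma lattice_uminus: "is_lattice L \<Longrightarrow> u \<in> L \<Longrightarrow> (\<lambda>i. - u i) \<in> L"
  by (simp add: is_lattice_def)

definition in_coset :: "('n \<Rightarrow> int) set \<Rightarrow> ('n \<Rightarrow> int) \<Rightarrow> ('n \<Rightarrow>\<^sub>0 nat) \<Rightarrow> bool" where
  "in_coset L z w \<longleftrightarrow> (\<lambda>i. int (lookup w i) - z i) \<in> L"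

abbreviation expvec :: "('n \<Rightarrow>\<^sub>0 nat) \<Rightarrow> 'n \<Rightarrow> int" where
  "expvec w \<equiv> \<lambda>i. int (lookup w i)"

definition coset_coeff_sum :: "('n \<Rightarrow> int) set \<Rightarrow> ('n \<Rightarrow> int) \<Rightarrow> (('n \<Rightarrow>\<^sub>0 nat) \<Rightarrow>\<^sub>0 'k::comm_ring_1) \<Rightarrow> 'k" where
  "coset_coeff_sum L z P = sum (lookup P) {w \<in> keys P. in_coset L z w}"

lemma coset_coeff_sum_0 [simp]: "coset_coeff_sum L z 0 = 0"
  by (simp add: coset_coeff_sum_def)

lemma coset_coeff_sum_superset:
  assumes "finite A" "keys P \<subseteq> A"
  shows "coset_coeff_sum L z P = sum (lookup P) {w\<in>A. in_coset L z w}"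
  unfolding coset_coeff_sum_def
  by (rule sum.mono_neutral_left) (use assms in \<open>auto simp: in_keys_iff\<close>)

lemma coset_coeff_sum_add: "coset_coeff_sum L z (P + Q) = coset_coeff_sum L z P + coset_coeff_sum L z Q"
proof -
  let ?A = "keys P \<union> keys Q"
  have "coset_coeff_sum L z (P + Q) = sum (lookup (P + Q)) {w\<in>?A. in_coset L z w}"
    by (rule coset_coeff_sum_superset[OF _ keys_add]) simp
  also have "\<dots> = sum (lookup P) {w\<in>?A. in_coset L z w} + sum (lookup Q) {w\<in>?A. in_coset L z w}"
    by (simp add: lookup_add sum.distrib)
  also have "\<dots> = coset_coeff_sum L z P + coset_coeff_sum L z Q"
    using coset_coeff_sum_superset[of ?A P L z] coset_coeff_sum_superset[of ?A Q L z] by simp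
  finally show ?thesis .
qed

lemma coset_coeff_sum_sum:
  "finite X \<Longrightarrow> coset_coeff_sum L z (sum f X) = (\<Sum>x\<in>X. coset_coeff_sum L z (f x))"
  by (induction X rule: finite_induct) (simp_all add: coset_coeff_sum_add)

lemma in_coset_add: "in_coset L z (b + a) \<longleftrightarrow> in_coset L (\<lambda>i. z i - int (lookup a i)) b"
  by (simp add: in_coset_def lookup_add algebra_simps)

lemma coset_coeff_sum_single_times:
  "coset_coeff_sum L z (single a c * g) = c * coset_coeff_sum L (\<lambda>i. z i - int (lookup a i)) g"
proof -
  let ?z' = "\<lambda>i. z i - int (lookup a i)"
  have keys: "keys (single a c * g) \<subseteq> (\<lambda>b. b + a) ` keys g"
    using keys_mult[of "single a c" g] by (auto split: if_splits simp: add.commute)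
  have "coset_coeff_sum L z (single a c * g)
      = sum (lookup (single a c * g)) ((\<lambda>b. b + a) ` {b \<in> keys g. in_coset L ?z' b})"
    by (subst coset_coeff_sum_superset[OF _ keys]) (auto simp: in_coset_add intro!: sum.cong)
  also have "\<dots> = (\<Sum>b \<in> {b \<in> keys g. in_coset L ?z' b}. lookup (single a c * g) (b + a))"
    by (rule sum.reindex[unfolded comp_def]) (auto simp: inj_on_def)
  also have "\<dots> = c * coset_coeff_sum L ?z' g"
    by (simp add: coset_coeff_sum_def mult.commute[of "single a c"] lookup_times_single_add
        sum_distrib_left mult.commute)
  finally show ?thesis .
qed

lemma coset_coeff_sum_times_eq_0:
  assumes "\<forall>z. coset_coeff_sum L z g = 0"
  shows "coset_coeff_sum L z (r * g) = 0"
proof -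
  have "r * g = (\<Sum>k\<in>keys r. single k (lookup r k) * g)"
    by (subst poly_mapping_sum_single_lookup[of r]) (simp add: sum_distrib_right)
  then show ?thesis
    using assms by (simp add: coset_coeff_sum_sum coset_coeff_sum_single_times)
qed

lemma coset_coeff_sum_generator_eq_0:
  fixes v :: "'n::finite \<Rightarrow> int"
  assumes L: "is_lattice L" and v: "v \<in> L"
  shows "coset_coeff_sum L z (mono (pos_part v) - mono (neg_part v) :: ('n, 'k::comm_ring_1) mpoly) = 0"
proof -
  define p where "p = (Abs_poly_mapping (pos_part v) :: 'n \<Rightarrow>\<^sub>0 nat)"
  define n where "n = (Abs_poly_mapping (neg_part v) :: 'n \<Rightarrow>\<^sub>0 nat)"
  have p_eq: "(\<lambda>i. int (lookup p i) - z i) = (\<lambda>i. (int (lookup n i) - z i) + v i)"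
    and n_eq: "(\<lambda>i. int (lookup n i) - z i) = (\<lambda>i. (int (lookup p i) - z i) + - v i)"
    by (auto simp: p_def n_def pos_part_def neg_part_def)
  have same_coset: "in_coset L z p \<longleftrightarrow> in_coset L z n"
  proof
    assume "in_coset L z p"
    from lattice_add[OF L this[unfolded in_coset_def] lattice_uminus[OF L v]]
    show "in_coset L z n" unfolding in_coset_def n_eq .
  next
    assume "in_coset L z n"
    from lattice_add[OF L this[unfolded in_coset_def] v]
    show "in_coset L z p" unfolding in_coset_def p_eq .
  qed
  have "coset_coeff_sum L z (single p 1 - single n (1::'k)) = 0"
  proof (cases "p = n")
    case False
    have "coset_coeff_sum L z (single p 1 - single n (1::'k))
        = sum (lookup (single p 1 - single n (1::'k))) {w\<in>{p,n}. in_coset L z w}"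
      by (rule coset_coeff_sum_superset[OF _ keys_single_diff_single]) simp
    also have "{w\<in>{p,n}. in_coset L z w} = (if in_coset L z p then {p, n} else {})"
      using same_coset by auto
    also have "sum (lookup (single p 1 - single n (1::'k))) \<dots> = 0"
      using False by (simp add: lookup_minus lookup_single when_def)
    finally show ?thesis .
  qed simp
  then show ?thesis by (simp add: mono_eq_single p_def n_def)
qed

lemma lattice_ideal_coset_coeff_sum_eq_0:
  assumes L: "is_lattice L" and P: "P \<in> lattice_ideal L"
  shows "coset_coeff_sum L z (P :: ('n::finite, 'k::comm_ring_1) mpoly) = 0"
proof -
  let ?J = "{P::('n, 'k) mpoly. \<forall>z. coset_coeff_sum L z P = 0}"
  have "is_ideal ?J"
    unfolding is_ideal_def by (auto simp: coset_coeff_sum_add coset_coeff_sum_times_eq_0)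
  moreover have "{mono (pos_part u) - mono (neg_part u) |u. u \<in> L} \<subseteq> ?J"
    using coset_coeff_sum_generator_eq_0[OF L] by blast
  ultimately have "lattice_ideal L \<subseteq> ?J"
    unfolding lattice_ideal_def by (rule ideal_gen_minimal)
  with P show ?thesis by blast
qed

section \<open>Partners and indispensable monomials\<close>

definition has_partner :: "('n \<Rightarrow> int) set \<Rightarrow> ('n \<Rightarrow>\<^sub>0 nat) \<Rightarrow> bool" where
  "has_partner L m \<longleftrightarrow> (\<exists>m'. m' \<noteq> m \<and> in_coset L (expvec m) m')"

lemma lattice_ideal_partner:
  fixes P :: "('n::finite, 'k::comm_ring_1) mpoly"
  assumes L: "is_lattice L" and P: "P \<in> lattice_ideal L" and m: "m \<in> keys P"
  shows "\<exists>m'\<in>keys P. m' \<noteq> m \<and> in_coset L (expvec m) m'"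
proof (rule ccontr)
  assume "\<not> ?thesis"
  moreover have "in_coset L (expvec m) m"
    using lattice_zero[OF L] by (simp add: in_coset_def)
  ultimately have "{w \<in> keys P. in_coset L (expvec m) w} = {m}"
    using m by auto
  then have "coset_coeff_sum L (expvec m) P = lookup P m"
    by (simp add: coset_coeff_sum_def)
  with lattice_ideal_coset_coeff_sum_eq_0[OF L P] m show False
    by (simp add: in_keys_iff)
qed

lemma lattice_ideal_has_partner:
  fixes P :: "('n::finite, 'k::comm_ring_1) mpoly"
  shows "is_lattice L \<Longrightarrow> P \<in> lattice_ideal L \<Longrightarrow> m \<in> keys P \<Longrightarrow> has_partner L m"
  unfolding has_partner_def by (metis lattice_ideal_partner)

lemma single_diff_single_in_lattice_ideal:
  fixes x y :: "'n::finite \<Rightarrow>\<^sub>0 nat"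
  assumes L: "is_lattice L" and y: "in_coset L (expvec x) y"
  shows "(single x 1 - single y 1 :: ('n, 'k::comm_ring_1) mpoly) \<in> lattice_ideal L"
proof -
  define v where "v = (\<lambda>i. int (lookup x i) - int (lookup y i))"
  have "v \<in> L"
    using lattice_uminus[OF L y[unfolded in_coset_def]] by (simp add: v_def)
  then have "(mono (pos_part v) - mono (neg_part v) :: ('n, 'k) mpoly) \<in> lattice_ideal L"
    unfolding lattice_ideal_def by (blast intro: subsetD[OF ideal_gen_subset])
  moreover define g where "g = (Abs_poly_mapping (\<lambda>i. min (lookup x i) (lookup y i)) :: 'n \<Rightarrow>\<^sub>0 nat)"
  have "x = g + Abs_poly_mapping (pos_part v)" "y = g + Abs_poly_mapping (neg_part v)"
    by (auto intro!: poly_mapping_eqI simp: lookup_add g_def pos_part_def neg_part_def v_def)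
  then have "(single x 1 - single y 1 :: ('n, 'k) mpoly)
      = single g 1 * (mono (pos_part v) - mono (neg_part v))"
    by (simp add: mono_eq_single right_diff_distrib mult_single)
  ultimately show ?thesis
    unfolding lattice_ideal_def by (simp add: ideal_gen_mult)
qed

text \<open>The generators need not be binomials here.\<close>

lemma indispensable_if_no_proper_divisor_has_partner:
  fixes M :: "'n::finite \<Rightarrow>\<^sub>0 nat"
  assumes L: "is_lattice L" and M: "has_partner L M"
    and minimal: "\<And>c p. M = c + p \<Longrightarrow> has_partner L p \<Longrightarrow> c = 0"
  shows "indispensable_monomial (lattice_ideal L :: ('n, 'k::comm_ring_1) mpoly set) (lookup M)"
  unfolding indispensable_monomial_def
proof (intro allI impI)
  fix G :: "('n, 'k) mpoly set"
  assume G: "(\<forall>B\<in>G. binomial B) \<and> ideal_gen G = lattice_ideal L"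
  from M obtain M' where M': "M' \<noteq> M" "in_coset L (expvec M) M'"
    by (auto simp: has_partner_def)
  have "(single M 1 - single M' 1 :: ('n, 'k) mpoly) \<in> ideal_gen G"
    using single_diff_single_in_lattice_ideal[OF L M'(2)] G by simp
  moreover have "M \<in> keys (single M 1 - single M' 1 :: ('n, 'k) mpoly)"
    using M'(1) by (rule in_keys_single_diff_single[OF not_sym])
  ultimately obtain g p c where g: "g \<in> G" "p \<in> keys g" "M = c + p"
    using ideal_gen_keys_divisible[of "\<lambda>_. True"] by blast
  have "g \<in> lattice_ideal L" using g(1) G ideal_gen_subset by blast
  with g minimal have "M = p"
    using lattice_ideal_has_partner[OF L] by fastforce
  with g show "\<exists>B\<in>G. lookup M \<in> monos_of B"
    by (auto simp: monos_of_eq_lookup_keys)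
qed

definition total_degree :: "('n::finite \<Rightarrow>\<^sub>0 nat) \<Rightarrow> nat" where
  "total_degree w = (\<Sum>i\<in>UNIV. lookup w i)"

lemma total_degree_add: "total_degree (a + b) = total_degree a + total_degree b"
  by (simp add: total_degree_def lookup_add sum.distrib)

lemma total_degree_eq_0_iff: "total_degree c = 0 \<longleftrightarrow> c = 0"
  by (auto simp: total_degree_def intro: poly_mapping_eqI)

lemma has_partner_indispensable_divisor:
  fixes m :: "'n::finite \<Rightarrow>\<^sub>0 nat"
  assumes L: "is_lattice L" and m: "has_partner L m"
  shows "\<exists>M c. indispensable_monomial (lattice_ideal L :: ('n, 'k::comm_ring_1) mpoly set) (lookup M)
            \<and> m = c + M"
proof -
  define X where "X = {M. has_partner L M \<and> (\<exists>c. m = c + M)}"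
  have "m \<in> X" using m by (auto simp: X_def intro: exI[of _ 0])
  then obtain M where M: "M \<in> X" and least: "\<And>M'. M' \<in> X \<Longrightarrow> total_degree M \<le> total_degree M'"
    using ex_has_least_nat[of "\<lambda>M. M \<in> X" m total_degree] by blast
  have "c = 0" if "M = c + p" "has_partner L p" for c p
  proof -
    from M obtain c0 where "m = c0 + M" by (auto simp: X_def)
    with that have "p \<in> X" by (auto simp: X_def add.assoc intro: exI[of _ "c0 + c"])
    with least[of p] that(1) show "c = 0"
      by (simp add: total_degree_add total_degree_eq_0_iff)
  qed
  with M show ?thesis
    using indispensable_if_no_proper_divisor_has_partner[OF L] by (auto simp: X_def)
qed

section \<open>Minimal supports of indispensable monomials\<close>

lemma T_min_indispensable:
  "E \<in> T_min I \<Longrightarrow> \<exists>M. indispensable_monomial I M \<and> msupp M = E"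
  unfolding T_min_def Let_def by blast

lemma T_min_minimal:
  "E \<in> T_min I \<Longrightarrow> indispensable_monomial I M \<Longrightarrow> msupp M \<subseteq> E \<Longrightarrow> msupp M = E"
  unfolding T_min_def Let_def by blast

lemma finite_T_min: "finite (T_min (I :: ('n::finite, 'k::comm_ring_1) mpoly set))"
  by (rule finite_subset[of _ UNIV]) simp_all

lemma indispensable_monomial_pos_part:
  fixes M :: "'n::finite \<Rightarrow> nat"
  assumes L: "is_lattice L"
    and M: "indispensable_monomial (lattice_ideal L :: ('n, 'k::comm_ring_1) mpoly set) M"
  shows "\<exists>v\<in>L. v \<noteq> (\<lambda>i. 0) \<and> M = pos_part v"
proof -
  let ?G = "{mono (pos_part u) - mono (neg_part u) :: ('n, 'k) mpoly | u. u \<in> L}"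
  have "\<forall>B\<in>?G. binomial B" unfolding binomial_def by auto
  then obtain v where v: "v \<in> L" "M \<in> monos_of (mono (pos_part v) - mono (neg_part v) :: ('n, 'k) mpoly)"
    using M unfolding indispensable_monomial_def lattice_ideal_def by blast
  then have "v \<noteq> (\<lambda>i. 0)" by (auto simp: monos_of_def pos_part_def neg_part_def)
  moreover have "M = pos_part v \<or> M = pos_part (\<lambda>i. - v i)"
    using monos_of_mono_diff_mono v(2) by (auto simp: pos_part_def neg_part_def)
  moreover have "(\<lambda>i. - v i) \<noteq> (\<lambda>i. 0)" if "v \<noteq> (\<lambda>i. 0)"
    using that by (auto simp: fun_eq_iff)
  ultimately show ?thesis
    using v(1) lattice_uminus[OF L v(1)] by blast
qed

text \<open>This is where \<open>L \<inter> \<nat>\<^sup>m = {0}\<close> enters.\<close>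

lemma T_min_binomial:
  fixes L :: "('n::finite \<Rightarrow> int) set"
  assumes L: "is_lattice L" and pos: "\<forall>u\<in>L. (\<forall>i. u i \<ge> 0) \<longrightarrow> u = (\<lambda>i. 0)"
    and E: "E \<in> T_min (lattice_ideal L :: ('n, 'k::comm_ring_1) mpoly set)"
  shows "\<exists>X Y. keys X = E \<and> \<not> keys Y \<subseteq> E
            \<and> (single X 1 - single Y 1 :: ('n, 'k) mpoly) \<in> lattice_ideal L"
proof -
  obtain v where v: "v \<in> L" "v \<noteq> (\<lambda>i. 0)" "msupp (pos_part v) = E"
    using T_min_indispensable[OF E] indispensable_monomial_pos_part[OF L] by blast
  define X where "X = (Abs_poly_mapping (pos_part v) :: 'n \<Rightarrow>\<^sub>0 nat)"
  define Y where "Y = (Abs_poly_mapping (neg_part v) :: 'n \<Rightarrow>\<^sub>0 nat)"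
  have keys_X: "keys X = E"
    using v(3) msupp_lookup[of X] by (simp add: X_def)
  have "(single X 1 - single Y 1 :: ('n, 'k) mpoly) \<in> lattice_ideal L"
    using v(1) unfolding lattice_ideal_def X_def Y_def mono_eq_single[symmetric]
    by (blast intro: subsetD[OF ideal_gen_subset])
  moreover have "\<not> keys Y \<subseteq> keys X"
  proof
    assume "keys Y \<subseteq> keys X"
    then have "\<forall>i. v i \<ge> 0"
      by (auto simp: X_def Y_def in_keys_iff pos_part_def neg_part_def subset_iff not_le)
        (meson not_less)
    with pos v(1,2) show False by blast
  qed
  ultimately show ?thesis using keys_X by blast
qed

text \<open>\<open>x\<^bsup>kX\<^esup>\<close> survives in \<open>(x\<^sup>X - x\<^sup>Y)\<^sup>k\<close>: any other product of the factors involves \<open>x\<^sup>Y\<close>,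
  hence a variable outside \<open>supp X\<close>.\<close>

lemma lookup_power_single_diff_single:
  fixes X Y :: "'n::finite \<Rightarrow>\<^sub>0 nat"
  assumes "\<not> keys Y \<subseteq> keys X"
  shows "lookup ((single X 1 - single Y 1 :: ('n, 'k::comm_ring_1) mpoly) ^ k)
           (Abs_poly_mapping (\<lambda>i. k * lookup X i)) = 1"
proof (induction k)
  case (Suc k)
  let ?D = "single X 1 - single Y 1 :: ('n, 'k) mpoly"
  let ?kX = "Abs_poly_mapping (\<lambda>i. k * lookup X i) :: 'n \<Rightarrow>\<^sub>0 nat"
  have Suc_kX: "Abs_poly_mapping (\<lambda>i. Suc k * lookup X i) = ?kX + X"
    by (rule poly_mapping_eqI) (simp add: lookup_add)
  from assms obtain i where "i \<in> keys Y" "i \<notin> keys X"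
    by blast
  then have i: "lookup Y i > 0" "lookup X i = 0"
    by (simp_all add: in_keys_iff)
  have "?kX + X \<noteq> l + Y" for l
  proof
    assume "?kX + X = l + Y"
    then have "lookup (?kX + X) i = lookup (l + Y) i" by simp
    with i show False by (simp add: lookup_add)
  qed
  then have "lookup (?D ^ k * single Y 1) (?kX + X) = 0"
    by (rule lookup_times_single_not_add)
  moreover have "lookup (?D ^ k * single X 1) (?kX + X) = 1"
    using Suc by (simp add: lookup_times_single_add)
  ultimately show ?case
    unfolding Suc_kX power_Suc2 right_diff_distrib lookup_minus by simp
qed simp

lemma T_min_support_of_generator:
  fixes L :: "('n::finite \<Rightarrow> int) set" and F :: "nat \<Rightarrow> ('n, 'k::comm_ring_1) mpoly"
  assumes L: "is_lattice L" and pos: "\<forall>u\<in>L. (\<forall>i. u i \<ge> 0) \<longrightarrow> u = (\<lambda>i. 0)"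
    and E: "E \<in> T_min (lattice_ideal L :: ('n, 'k) mpoly set)"
    and F: "\<forall>i<s. F i \<in> lattice_ideal L"
    and rad: "rad (lattice_ideal L) = rad (ideal_gen (F ` {..<s}))"
  shows "\<exists>i<s. \<exists>m\<in>monos_of (F i). msupp m = E"
proof -
  obtain X Y where XY: "keys X = E" "\<not> keys Y \<subseteq> E"
    "(single X 1 - single Y 1 :: ('n, 'k) mpoly) \<in> lattice_ideal L"
    using T_min_binomial[OF L pos E] by blast
  then obtain k where k: "(single X 1 - single Y 1 :: ('n, 'k) mpoly) ^ k \<in> ideal_gen (F ` {..<s})"
    using subset_rad rad unfolding rad_def by blast
  define kX where "kX = (Abs_poly_mapping (\<lambda>i. k * lookup X i) :: 'n \<Rightarrow>\<^sub>0 nat)"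
  have "kX \<in> keys ((single X 1 - single Y 1 :: ('n, 'k) mpoly) ^ k)"
    using lookup_power_single_diff_single[of Y X k, where 'k='k] XY(1,2) by (simp add: kX_def in_keys_iff)
  moreover have "keys kX \<subseteq> E"
    using XY(1) by (auto simp: kX_def in_keys_iff)
  moreover have "keys (a + b) \<subseteq> E \<Longrightarrow> keys b \<subseteq> E" for a b :: "'n \<Rightarrow>\<^sub>0 nat"
    by (auto simp: in_keys_iff lookup_add)
  ultimately obtain i p c where i: "i < s" "p \<in> keys (F i)" "kX = c + p"
    using ideal_gen_keys_divisible[of "\<lambda>w. keys w \<subseteq> E", OF _ k] by blast
  have keys_p: "keys p \<subseteq> E"
    using \<open>keys kX \<subseteq> E\<close> i(3) by (auto simp: in_keys_iff lookup_add)
  have "has_partner L p"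
    using lattice_ideal_has_partner[OF L] F i by blast
  then obtain M c' where M: "indispensable_monomial (lattice_ideal L :: ('n, 'k) mpoly set) (lookup M)"
    "p = c' + M"
    using has_partner_indispensable_divisor[OF L] by blast
  have "keys M \<subseteq> keys p"
    using M(2) by (auto simp: in_keys_iff lookup_add)
  with keys_p have "keys M = E"
    using T_min_minimal[OF E M(1)] by (simp add: msupp_lookup)
  with keys_p \<open>keys M \<subseteq> keys p\<close> have "msupp (lookup p) = E"
    by (simp add: msupp_lookup)
  with i show ?thesis
    by (metis monos_of_eq_lookup_keys)
qed

lemma lattice_subset_Sat: "L \<subseteq> Sat L"
  unfolding Sat_def by (auto intro: exI[of _ 1])

lemma Adeg_eq_if_diff_in_kerZ:
  assumes "(\<lambda>i. int (v i) - int (u i)) \<in> kerZ a"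
  shows "Adeg a u = Adeg a v"
proof
  fix j
  have "(\<Sum>i\<in>UNIV. int (v i) * a i j) - (\<Sum>i\<in>UNIV. int (u i) * a i j) = 0"
    using assms by (simp add: kerZ_def sum_subtractf[symmetric] left_diff_distrib)
  then show "Adeg a u j = Adeg a v j" by (simp add: Adeg_def)
qed

lemma binomial_in_lattice_ideal_A_homogeneous:
  fixes L :: "('n::finite \<Rightarrow> int) set" and B :: "('n, 'k::comm_ring_1) mpoly"
  assumes L: "is_lattice L" and Sat: "Sat L = kerZ a"
    and B: "binomial B" "B \<in> lattice_ideal L"
  shows "A_homogeneous a B"
proof -
  from B(1) obtain u v where B_eq: "B = mono u - mono v" by (auto simp: binomial_def)
  have "Adeg a u = Adeg a v"
  proof (cases "u = v")
    case False
    define U V where "U = (Abs_poly_mapping u :: 'n \<Rightarrow>\<^sub>0 nat)" and "V = (Abs_poly_mapping v :: 'n \<Rightarrow>\<^sub>0 nat)"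
    have "U \<noteq> V"
    proof
      assume "U = V"
      then have "lookup U = lookup V" by simp
      with False show False by (simp add: U_def V_def)
    qed
    have B_single: "B = single U 1 - single V 1" by (simp add: B_eq mono_eq_single U_def V_def)
    have "U \<in> keys B"
      using B_single in_keys_single_diff_single[OF \<open>U \<noteq> V\<close>] by simp
    then obtain m' where m': "m' \<in> keys B" "m' \<noteq> U" "in_coset L (expvec U) m'"
      using lattice_ideal_partner[OF L B(2)] by blast
    have "keys B \<subseteq> {U, V}"
      using B_single keys_single_diff_single by simp
    with m' have "in_coset L (expvec U) V" by auto
    then have "(\<lambda>i. int (v i) - int (u i)) \<in> L"
      by (simp add: in_coset_def U_def V_def)
    then have "(\<lambda>i. int (v i) - int (u i)) \<in> kerZ a"
      using lattice_subset_Sat Sat by blast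
    then show ?thesis by (rule Adeg_eq_if_diff_in_kerZ)
  qed simp
  moreover have "monos_of B \<subseteq> {u, v}"
    using B_eq monos_of_mono_diff_mono by simp
  ultimately show ?thesis
    unfolding A_homogeneous_def by (metis insert_iff singletonD subsetD)
qed

definition supports_in_T_min :: "('n::finite, 'k::comm_ring_1) mpoly set \<Rightarrow> ('n, 'k) mpoly \<Rightarrow> 'n set set" where
  "supports_in_T_min I P = {E \<in> T_min I. \<exists>m\<in>monos_of P. msupp m = E}"

lemma A_homogeneous_supports_in_Gamma:
  assumes P: "A_homogeneous a P" and X: "X \<noteq> {}" "X \<subseteq> supports_in_T_min I P"
  shows "X \<in> Gamma a I"
proof -
  have "\<exists>m. m \<in> monos_of P \<and> msupp m = E" if "E \<in> X" for E
    using that X(2) by (auto simp: supports_in_T_min_def)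
  then obtain M where M: "\<And>E. E \<in> X \<Longrightarrow> M E \<in> monos_of P \<and> msupp (M E) = E"
    by metis
  from X(1) obtain E0 where "E0 \<in> X" by blast
  with M P have "\<forall>E\<in>X. msupp (M E) = E \<and> Adeg a (M E) = Adeg a (M E0)"
    unfolding A_homogeneous_def by blast
  moreover have "X \<subseteq> T_min I" using X(2) by (auto simp: supports_in_T_min_def)
  ultimately show ?thesis unfolding Gamma_def using X(1) by blast
qed

lemma card_supports_in_T_min_binomial:
  assumes "binomial (B :: ('n::finite, 'k::comm_ring_1) mpoly)"
  shows "card (supports_in_T_min I B) \<le> 2"
proof -
  from assms obtain u v where "B = mono u - mono v" by (auto simp: binomial_def)
  then have "supports_in_T_min I B \<subseteq> msupp ` {u, v}"
    using monos_of_mono_diff_mono by (fastforce simp: supports_in_T_min_def)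
  then have "card (supports_in_T_min I B) \<le> card (msupp ` {u, v})"
    by (rule card_mono[rotated]) simp
  also have "\<dots> \<le> 2"
    using card_image_le[of "{u, v}" msupp] by (simp add: card_insert_if split: if_splits)
  finally show ?thesis .
qed

lemma Union_Gamma_subset_T_min: "\<Union>(Gamma a I) \<subseteq> T_min I"
  by (auto simp: Gamma_def)

lemma finite_Gamma: "finite (Gamma a (I :: ('n::finite, 'k::comm_ring_1) mpoly set))"
  by (rule finite_subset[of _ "Pow (T_min I)"]) (auto simp: Gamma_def finite_T_min)

section \<open>Matchings\<close>

lemma J_matching_disjointed:
  fixes D :: "'v set set" and S :: "nat \<Rightarrow> 'v set"
  assumes finite: "\<And>i. i < s \<Longrightarrow> finite (S i)"
    and faces: "\<And>i X. i < s \<Longrightarrow> X \<noteq> {} \<Longrightarrow> X \<subseteq> S i \<Longrightarrow> X \<in> D \<and> card X - 1 \<in> J"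
  shows "J_matching D J (disjointed S ` {0..<s} - {{}})"
proof -
  let ?Ms = "disjointed S ` {0..<s} - {{}}"
  have face: "X \<in> D \<and> card X - 1 \<in> J \<and> X \<noteq> {} \<and> finite X" if "X \<in> ?Ms" for X
  proof -
    from that obtain i where i: "i < s" "X = disjointed S i" "X \<noteq> {}" by force
    then have "X \<subseteq> S i" using disjointed_subset[of S i] by simp
    with i faces finite show ?thesis by (meson finite_subset)
  qed
  show ?thesis
    unfolding J_matching_def
  proof (intro conjI ballI impI)
    show "finite ?Ms" by simp
    show "?Ms \<subseteq> D" using face by blast
  next
    fix X Y assume "X \<in> ?Ms" "Y \<in> ?Ms" "X \<noteq> Y"
    then obtain i j where "X = disjointed S i" "Y = disjointed S j" "i \<noteq> j" by auto
    then show "X \<inter> Y = {}"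
      using disjoint_family_disjointed[of S] by (simp add: disjoint_family_on_def)
  qed (use face in blast)+
qed

lemma max_J_matching_if_covers:
  assumes "J_matching D J Ms" "finite V" "\<Union>D \<subseteq> V" "\<Union>Ms = V"
  shows "max_J_matching D J Ms"
  unfolding max_J_matching_def
proof (intro conjI allI impI assms(1))
  fix Ms' assume "J_matching D J Ms'"
  with assms(3) have "\<Union>Ms' \<subseteq> V" by (auto simp: J_matching_def)
  with assms(2,4) show "card (\<Union>Ms') \<le> card (\<Union>Ms)" by (simp add: card_mono)
qed

lemma delta_le_card: "max_J_matching D J Ms \<Longrightarrow> delta D J \<le> card Ms"
  unfolding delta_def by (intro Least_le) blast

lemma delta_le_if_covered:
  fixes D :: "'v set set" and S :: "nat \<Rightarrow> 'v set"
  assumes V: "finite V" "\<Union>D \<subseteq> V" "V \<subseteq> (\<Union>i\<in>{0..<s}. S i)"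
    and faces: "\<And>i X. i < s \<Longrightarrow> X \<noteq> {} \<Longrightarrow> X \<subseteq> S i \<Longrightarrow> X \<in> D \<and> card X - 1 \<in> J"
  shows "delta D J \<le> s"
proof -
  define Ms where "Ms = disjointed S ` {0..<s} - {{}}"
  have S_V: "S i \<subseteq> V" if "i < s" for i
  proof
    fix x assume "x \<in> S i"
    with faces[OF that, of "{x}"] have "{x} \<in> D" by blast
    with V(2) show "x \<in> V" by blast
  qed
  have "\<Union>Ms = (\<Union>i\<in>{0..<s}. disjointed S i)" by (auto simp: Ms_def)
  also have "\<dots> = V"
    using V(3) S_V finite_UN_disjointed_eq[where A=S and n=s] by fastforce
  finally have "\<Union>Ms = V" .
  moreover have "J_matching D J Ms"
    unfolding Ms_def by (rule J_matching_disjointed[OF finite_subset[OF S_V V(1)] faces])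
  ultimately have "max_J_matching D J Ms"
    using V(1,2) max_J_matching_if_covers by blast
  then have "delta D J \<le> card Ms" by (rule delta_le_card)
  also have "\<dots> \<le> card (disjointed S ` {0..<s})"
    by (rule card_mono) (auto simp: Ms_def)
  also have "\<dots> \<le> s"
    using card_image_le[of "{0..<s}" "disjointed S"] by simp
  finally show ?thesis .
qed

lemma delta_Gamma_le_num_generators:
  fixes L :: "('n::finite \<Rightarrow> int) set" and F :: "nat \<Rightarrow> ('n, 'k::comm_ring_1) mpoly"
    and a :: "'n \<Rightarrow> ('d::finite \<Rightarrow> int)"
  assumes L: "is_lattice L" and pos: "\<forall>u\<in>L. (\<forall>i. u i \<ge> 0) \<longrightarrow> u = (\<lambda>i. 0)"
    and F: "\<forall>i<s. A_homogeneous a (F i) \<and> F i \<in> lattice_ideal L"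
    and rad: "rad (lattice_ideal L) = rad (ideal_gen (F ` {..<s}))"
    and dim: "\<And>i X. i < s \<Longrightarrow> X \<noteq> {} \<Longrightarrow> X \<subseteq> supports_in_T_min (lattice_ideal L) (F i)
                \<Longrightarrow> card X - 1 \<in> J"
  shows "delta (Gamma a (lattice_ideal L :: ('n, 'k) mpoly set)) J \<le> s"
proof (rule delta_le_if_covered[OF finite_T_min Union_Gamma_subset_T_min])
  show "T_min (lattice_ideal L :: ('n, 'k) mpoly set)
      \<subseteq> (\<Union>i\<in>{0..<s}. supports_in_T_min (lattice_ideal L) (F i))"
  proof
    fix E assume E: "E \<in> T_min (lattice_ideal L :: ('n, 'k) mpoly set)"
    have "\<forall>i<s. F i \<in> lattice_ideal L" using F by blast
    from T_min_support_of_generator[OF L pos E this rad]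
    obtain i where "i < s" "E \<in> supports_in_T_min (lattice_ideal L) (F i)"
      using E by (auto simp: supports_in_T_min_def)
    then show "E \<in> (\<Union>i\<in>{0..<s}. supports_in_T_min (lattice_ideal L) (F i))" by auto
  qed
  show "X \<in> Gamma a (lattice_ideal L :: ('n, 'k) mpoly set) \<and> card X - 1 \<in> J"
    if "i < s" "X \<noteq> {}" "X \<subseteq> supports_in_T_min (lattice_ideal L) (F i)" for i X
  proof -
    have "A_homogeneous a (F i)" using F that(1) by blast
    from A_homogeneous_supports_in_Gamma[OF this that(2,3)]
    have "X \<in> Gamma a (lattice_ideal L :: ('n, 'k) mpoly set)" .
    with dim[OF that] show ?thesis by blast
  qed
qed

lemma delta_Gamma_le_bar:
  fixes L :: "('n::finite \<Rightarrow> int) set" and a :: "'n \<Rightarrow> ('d::finite \<Rightarrow> int)"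
  assumes L: "is_lattice L" and pos: "\<forall>u\<in>L. (\<forall>i. u i \<ge> 0) \<longrightarrow> u = (\<lambda>i. 0)"
    and Sat: "Sat L = kerZ a"
  shows "enat (delta (Gamma a (lattice_ideal L :: ('n, 'k::comm_ring_1) mpoly set)) {0, 1})
           \<le> bar (lattice_ideal L :: ('n, 'k) mpoly set)"
  unfolding bar_def
proof (rule INF_greatest, clarify)
  fix s and B :: "nat \<Rightarrow> ('n, 'k) mpoly"
  assume B: "\<forall>i<s. binomial (B i) \<and> B i \<in> lattice_ideal L"
    and rad: "rad (lattice_ideal L) = rad (ideal_gen (B ` {..<s}))"
  have "card X - 1 \<in> {0, 1}"
    if "i < s" "X \<noteq> {}" "X \<subseteq> supports_in_T_min (lattice_ideal L) (B i)" for i X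
  proof -
    have fin: "finite (supports_in_T_min (lattice_ideal L :: ('n, 'k) mpoly set) (B i))"
      using finite_T_min by (rule finite_subset[rotated]) (auto simp: supports_in_T_min_def)
    have "card X \<le> card (supports_in_T_min (lattice_ideal L :: ('n, 'k) mpoly set) (B i))"
      using fin that(3) by (rule card_mono)
    also have "\<dots> \<le> 2"
      using B that(1) card_supports_in_T_min_binomial by blast
    finally have "card X \<le> 2" .
    moreover have "card X \<noteq> 0"
      using that(2,3) fin finite_subset by fastforce
    ultimately show ?thesis by auto
  qed
  moreover have "\<forall>i<s. A_homogeneous a (B i) \<and> B i \<in> lattice_ideal L"
    using B binomial_in_lattice_ideal_A_homogeneous[OF L Sat] by blast
  ultimately have "delta (Gamma a (lattice_ideal L :: ('n, 'k) mpoly set)) {0, 1} \<le> s"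
    using delta_Gamma_le_num_generators[OF L pos _ rad] by blast
  then show "enat (delta (Gamma a (lattice_ideal L :: ('n, 'k) mpoly set)) {0, 1}) \<le> enat s"
    by simp
qed

lemma delta_Gamma_le_araA:
  fixes L :: "('n::finite \<Rightarrow> int) set" and a :: "'n \<Rightarrow> ('d::finite \<Rightarrow> int)"
  assumes L: "is_lattice L" and pos: "\<forall>u\<in>L. (\<forall>i. u i \<ge> 0) \<longrightarrow> u = (\<lambda>i. 0)"
  defines "G \<equiv> Gamma a (lattice_ideal L :: ('n, 'k::comm_ring_1) mpoly set)"
  shows "enat (delta G {0..cdim G}) \<le> araA a (lattice_ideal L :: ('n, 'k) mpoly set)"
  unfolding araA_def
proof (rule INF_greatest, clarify)
  fix s and F :: "nat \<Rightarrow> ('n, 'k) mpoly"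
  assume F: "\<forall>i<s. A_homogeneous a (F i) \<and> F i \<in> lattice_ideal L"
    and rad: "rad (lattice_ideal L) = rad (ideal_gen (F ` {..<s}))"
  have "card X - 1 \<in> {0..cdim G}"
    if "i < s" "X \<noteq> {}" "X \<subseteq> supports_in_T_min (lattice_ideal L) (F i)" for i X
  proof -
    have "A_homogeneous a (F i)" using F that(1) by blast
    from A_homogeneous_supports_in_Gamma[OF this that(2,3)] have "X \<in> G"
      by (simp add: G_def)
    then have "card X - 1 \<le> cdim G"
      unfolding cdim_def G_def using finite_Gamma by (intro Max_ge) auto
    then show ?thesis by simp
  qed
  then have "delta G {0..cdim G} \<le> s"
    unfolding G_def by (rule delta_Gamma_le_num_generators[OF L pos F rad])
  then show "enat (delta G {0..cdim G}) \<le> enat s"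
    by simp
qed

theorem theorem2p13:
  fixes L :: "('n::finite \<Rightarrow> int) set"
    and a :: "'n \<Rightarrow> ('d::finite \<Rightarrow> int)"
  assumes "is_lattice L"
    and "L \<noteq> {(\<lambda>i. 0)}"
    and "\<forall>u\<in>L. (\<forall>i. u i \<ge> 0) \<longrightarrow> u = (\<lambda>i. 0)"
    and "Sat L = kerZ a"
  shows "bar (lattice_ideal L :: ('n, 'k::field) mpoly set)
           \<ge> enat (delta (Gamma a (lattice_ideal L :: ('n, 'k) mpoly set)) {0, 1})
       \<and> araA a (lattice_ideal L :: ('n, 'k) mpoly set)
           \<ge> enat (delta (Gamma a (lattice_ideal L :: ('n, 'k) mpoly set))
                  {0..cdim (Gamma a (lattice_ideal L :: ('n, 'k) mpoly set))})"
  using delta_Gamma_le_bar[OF assms(1,3,4), where 'k='k] delta_Gamma_le_araA[OF assms(1,3), of a, where 'k='k]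
  by simp

end
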